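(* Under the hypotheses of Theorem 2 (Assumptions A, B, C, D; Algorithm 2; $T=\beta/\varepsilon$; $\eta^{(t)}=D\sqrt\varepsilon$; $\alpha_i^{(t)}=(1+\varepsilon)^t\frac{\alpha}{e^\beta L_\phi}$ with $\alpha\in(0,\tfrac14)$), $$\frac1T\sum_{t=0}^{T-1}\frac1n\sum_{i=1}^n\big[f(w^{(t)};i)-\phi_i(h_i^* )\big]\le\frac{e^{\beta}L_\phi(1+\varepsilon)}{2(1-4\alpha)\alpha\beta}\cdot\frac1n\sum_{i=1}^n\|h(w^{(0)};i)-h_i^*\|^2\cdot\varepsilon+\frac{e^{\beta}L_\phi(4\varepsilon+3)}{2\alpha(1-4\alpha)}\Big[D^2H^2+c\big(2+(V+\varepsilon^2+2)GD^2\big)^2+2+V\Big]\varepsilon.$$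
   Context: Let $n,c,d$ be positive integers and $[n]=\{1,\dots,n\}$. For each $i\in[n]$ let $h(\cdot;i):\mathbb{R}^d\to\mathbb{R}^c$ (components $h_j(\cdot;i)$) and $\phi_i:\mathbb{R}^c\to\mathbb{R}$; $f(w;i)=\phi_i(h(w;i))$. Each $\phi_i$ attains its minimum at $h_i^*$. Norms: Euclidean for vectors, operator for matrices. Assumption A: each $\phi_i$ is convex, bounded below, and $L_\phi$-smooth. Assumption B: each $h(\cdot;i)$ is twice continuously differentiable and there is $G>0$ with $\|\nabla_w^2 h_j(w;i)\|\le G$ for all $w,i,j$. Iteration setup: given $\varepsilon>0$, $\eta^{(t)}>0$, $\alpha_i^{(t)}>0$ and iterates $w^{(t)}$, let $H_i^{(t)}$ be the Jacobian of $h(\cdot;i)$ at $w^{(t)}$, $\Phi^{(t)}(v)=\frac{1}{2n}\sum_{i=1}^n\|\eta^{(t)}H_i^{(t)}v-\alpha_i^{(t)}\nabla\phi_i(h(w^{(t)};i))\|^2$, $\Psi^{(t)}(v)=\Phi^{(t)}(v)+\frac{\varepsilon^2}{2}\|v\|^2$, $v_{*\mathrm{reg}}^{(t)}$ its unique minimizer. Algorithm 2: $w^{(0)}$ arbitrary, $w^{(t+1)}=w^{(t)}-\eta^{(t)}v^{(t)}$ where $\|v^{(t)}-v_{*\mathrm{reg}}^{(t)}\|\le\varepsilon$, $t=0,\dots,T-1$, with $T=\beta/\varepsilon$ an integer, $\beta>0$. Assumption C (constant $V>0$): for each $0\le t<T$ there is $\hat v^{(t)}$ with $\|\hat v^{(t)}\|^2\le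 V$ and $\Phi^{(t)}(\hat v^{(t)})\le\varepsilon^2$. Assumption D (constant $H>0$): $\|H_i^{(t)}\|\le H/\sqrt\varepsilon$ for all $i\in[n]$, $0\le t<T$. *)

theory Defs
  imports "HOL-Analysis.Analysis"
begin

text \<open>Phi^(t)(v) = 1/(2n) sum_{i=1..n} norm(eta * H_i v - a_i * g_i)^2, where H_i is the
Jacobian (a c x d matrix) of h(.;i) at w^(t) and g_i the gradient of phi_i at h(w^(t);i).\<close>
definition Phi_obj :: "nat \<Rightarrow> real \<Rightarrow> (nat \<Rightarrow> real) \<Rightarrow> (nat \<Rightarrow> real^'d^'c) \<Rightarrow> (nat \<Rightarrow> real^'c)
    \<Rightarrow> real^'d \<Rightarrow> real" where
  "Phi_obj n eta a Hm g v =
     (1 / (2 * real n)) * (\<Sum>i=1..n. (norm (eta *\<^sub>R (Hm i *v v) - a i *\<^sub>R g i))\<^sup>2)"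

definition Psi_obj :: "nat \<Rightarrow> real \<Rightarrow> (nat \<Rightarrow> real) \<Rightarrow> (nat \<Rightarrow> real^'d^'c) \<Rightarrow> (nat \<Rightarrow> real^'c)
    \<Rightarrow> real \<Rightarrow> real^'d \<Rightarrow> real" where
  "Psi_obj n eta a Hm g eps v = Phi_obj n eta a Hm g v + eps\<^sup>2 / 2 * (norm v)\<^sup>2"

end

theory Submission
  imports Defs
begin

text \<open>Write S_t = \<Sum>_i \<parallel>h(w_t;i) - h_i*\<parallel>^2 and \<Delta>_t = \<Sum>_i (\<phi>_i(h(w_t;i)) - \<phi>_i(h_i*)).
One step of the algorithm moves every h(\<cdot>;i) by -a_t \<nabla>\<phi>_i up to an error of size O(\<epsilon>): the
second-order Taylor remainder (Assumption B), the residual of the regularized least-squares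
problem (small by Assumption C) and the inexactness \<parallel>v - v_reg\<parallel> \<le> \<epsilon> (amplified by Assumption D).
Convexity and smoothness of \<phi>_i turn the exact part into the gradient-descent contraction, so
S_(t+1) \<le> (1+\<epsilon>)(S_t - 2 a_t (1-\<alpha>) \<Delta>_t) + O(n\<epsilon>). Since a_t grows like (1+\<epsilon>)^t, the discounted
distances S_t/(1+\<epsilon>)^t telescope to a bound on \<Sum>_t \<Delta>_t, and (1+\<epsilon>)^t \<le> e^\<beta> for t < T = \<beta>/\<epsilon>
keeps a_t L_\<phi> \<le> \<alpha>.\<close>

lemma second_order_remainder_abs_le:
  fixes f f' f'' :: "real \<Rightarrow> real"
  assumes f': "\<And>s. (f has_real_derivative f' s) (at s)"
    and f'': "\<And>s. (f' has_real_derivative f'' s) (at s)"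
    and bound: "\<And>s. \<bar>f'' s\<bar> \<le> K"
  shows "\<bar>f 1 - f 0 - f' 0\<bar> \<le> K / 2"
proof -
  define diff where "diff m = (if m = 0 then f else if m = 1 then f' else f'')" for m :: nat
  have "\<forall>m t. m < 2 \<and> 0 \<le> t \<and> t \<le> 1 \<longrightarrow> (diff m has_real_derivative diff (Suc m) t) (at t)"
    using f' f'' by (auto simp: diff_def less_2_cases_iff)
  then obtain t where "f 1 = (\<Sum>m<2. diff m 0 / fact m * 1 ^ m) + diff 2 t / fact 2 * 1 ^ 2"
    using Maclaurin2[of 1 diff f 2] by (auto simp: diff_def)
  then have "f 1 - f 0 - f' 0 = f'' t / 2"
    by (simp add: diff_def eval_nat_numeral)
  then show ?thesis using bound[of t] by linarith
qed

lemma quadratic_upper_bound_from_derivative: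
  fixes f f' :: "real \<Rightarrow> real"
  assumes f': "\<And>s. 0 \<le> s \<Longrightarrow> s \<le> 1 \<Longrightarrow> (f has_real_derivative f' s) (at s)"
    and growth: "\<And>s. 0 \<le> s \<Longrightarrow> s \<le> 1 \<Longrightarrow> f' s - f' 0 \<le> K * s"
  shows "f 1 - f 0 - f' 0 \<le> K / 2"
proof -
  let ?g = "\<lambda>s. f s - s * f' 0 - K / 2 * s\<^sup>2"
  have "?g 1 \<le> ?g 0"
  proof (rule DERIV_nonpos_imp_nonincreasing[of 0 1])
    fix s :: real assume s: "0 \<le> s" "s \<le> 1"
    show "\<exists>y. (?g has_real_derivative y) (at s) \<and> y \<le> 0"
      using f'[OF s] growth[OF s]
      by (intro exI[of _ "f' s - f' 0 - K * s"])
        (auto intro!: derivative_eq_intros simp: power2_eq_square)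
  qed simp
  then show ?thesis by simp
qed

lemma has_real_derivative_along_line:
  fixes F :: "'a::real_normed_vector \<Rightarrow> real"
  assumes "(F has_derivative F') (at (x + s *\<^sub>R d))" and "bounded_linear F'"
  shows "((\<lambda>s. F (x + s *\<^sub>R d)) has_real_derivative F' d) (at s)"
proof -
  have "((\<lambda>s. x + s *\<^sub>R d) has_derivative (\<lambda>s. s *\<^sub>R d)) (at s)"
    by (auto intro!: derivative_eq_intros)
  from has_derivative_compose[OF this assms(1)]
  have "((\<lambda>s. F (x + s *\<^sub>R d)) has_derivative (\<lambda>t. F' (t *\<^sub>R d))) (at s)" .
  moreover have "(\<lambda>t. F' (t *\<^sub>R d)) = (*) (F' d)"
    using assms(2) by (simp add: fun_eq_iff linear_simps bounded_linear.linear)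
  ultimately show ?thesis by (simp add: has_field_derivative_def)
qed

lemma taylor_remainder_sq_le:
  fixes h :: "real^'d \<Rightarrow> real^'c" and J :: "real^'d \<Rightarrow> real^'d^'c"
    and Hs :: "'c \<Rightarrow> real^'d \<Rightarrow> real^'d^'d"
  assumes jac: "\<And>w. (h has_derivative (\<lambda>u. J w *v u)) (at w)"
    and hess: "\<And>j w. ((\<lambda>x. J x $ j) has_derivative (\<lambda>u. Hs j w *v u)) (at w)"
    and hess_bound: "\<And>j w. onorm (\<lambda>u. Hs j w *v u) \<le> G"
  shows "(norm (h (w + s) - h w - J w *v s))\<^sup>2 \<le> real CARD('c) * (G / 2 * (norm s)\<^sup>2)\<^sup>2"
proof -
  have component: "\<bar>(h (w + s) - h w - J w *v s) $ j\<bar> \<le> G / 2 * (norm s)\<^sup>2" for j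
  proof -
    let ?f = "\<lambda>t. h (w + t *\<^sub>R s) $ j"
    let ?f' = "\<lambda>t. J (w + t *\<^sub>R s) $ j \<bullet> s"
    let ?f'' = "\<lambda>t. (Hs j (w + t *\<^sub>R s) *v s) \<bullet> s"
    have "(?f has_real_derivative ?f' t) (at t)" for t
    proof -
      have "((\<lambda>x. h x $ j) has_derivative (\<lambda>u. (J (w + t *\<^sub>R s) *v u) $ j)) (at (w + t *\<^sub>R s))"
        by (rule bounded_linear.has_derivative[OF bounded_linear_vec_nth jac])
      from has_real_derivative_along_line[OF this] show ?thesis
        by (simp add: matrix_vector_mul_component bounded_linear_inner_right)
    qed
    moreover have "(?f' has_real_derivative ?f'' t) (at t)" for t
    proof -
      have "((\<lambda>x. J x $ j \<bullet> s) has_derivative (\<lambda>u. (Hs j (w + t *\<^sub>R s) *v u) \<bullet> s)) (at (w + t *\<^sub>R s))"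
        using hess by (auto intro!: derivative_eq_intros)
      from has_real_derivative_along_line[OF this] show ?thesis
        by (simp add: bounded_linear_compose[OF bounded_linear_inner_left])
    qed
    moreover have "\<bar>?f'' t\<bar> \<le> G * (norm s)\<^sup>2" for t
    proof -
      have "\<bar>?f'' t\<bar> \<le> norm (Hs j (w + t *\<^sub>R s) *v s) * norm s"
        by (rule Cauchy_Schwarz_ineq2)
      also have "\<dots> \<le> (onorm (\<lambda>u. Hs j (w + t *\<^sub>R s) *v u) * norm s) * norm s"
        by (intro mult_right_mono onorm) auto
      also have "\<dots> \<le> (G * norm s) * norm s"
        by (intro mult_right_mono hess_bound) auto
      finally show ?thesis by (simp add: power2_eq_square mult.assoc)
    qed
    ultimately have "\<bar>?f 1 - ?f 0 - ?f' 0\<bar> \<le> G * (norm s)\<^sup>2 / 2"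
      by (rule second_order_remainder_abs_le)
    then show ?thesis by (simp add: matrix_vector_mul_component)
  qed
  have "(norm (h (w + s) - h w - J w *v s))\<^sup>2 = (\<Sum>j\<in>UNIV. ((h (w + s) - h w - J w *v s) $ j)\<^sup>2)"
    by (simp add: norm_vec_def L2_set_def sum_nonneg)
  also have "\<dots> \<le> (\<Sum>j\<in>(UNIV::'c set). (G / 2 * (norm s)\<^sup>2)\<^sup>2)"
    by (intro sum_mono) (metis component abs_le_square_iff abs_of_nonneg abs_ge_zero order_trans power2_abs)
  also have "\<dots> = real CARD('c) * (G / 2 * (norm s)\<^sup>2)\<^sup>2" by simp
  finally show ?thesis .
qed

lemma convex_gradient_inequality:
  fixes F :: "'a::real_inner \<Rightarrow> real"
  assumes convex: "convex_on UNIV F" and grad: "\<And>x. GDERIV F x :> g x"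
  shows "F x + g x \<bullet> (y - x) \<le> F y"
proof -
  let ?k = "\<lambda>t. F (x + t *\<^sub>R (y - x))"
  have "convex_on UNIV ?k"
  proof (rule convex_onI)
    fix t a b :: real assume t: "0 < t" "t < 1"
    have "x + ((1 - t) * a + t * b) *\<^sub>R (y - x)
        = (1 - t) *\<^sub>R (x + a *\<^sub>R (y - x)) + t *\<^sub>R (x + b *\<^sub>R (y - x))"
      by (simp add: algebra_simps)
    then show "?k ((1 - t) *\<^sub>R a + t *\<^sub>R b) \<le> (1 - t) * ?k a + t * ?k b"
      using convex_onD[OF convex, of t] t by simp
  qed simp
  moreover have "(F has_derivative (\<lambda>h. h \<bullet> g x)) (at (x + 0 *\<^sub>R (y - x)))"
    using grad[of x] by (simp add: gderiv_def)
  from has_real_derivative_along_line[OF this bounded_linear_inner_left]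
  have "(?k has_real_derivative (y - x) \<bullet> g x) (at 0)" .
  ultimately have "?k 1 - ?k 0 \<ge> (y - x) \<bullet> g x * (1 - 0)"
    by (intro convex_on_imp_above_tangent) auto
  then show ?thesis by (simp add: inner_commute)
qed

lemma smooth_descent_lemma:
  fixes F :: "'a::real_inner \<Rightarrow> real"
  assumes grad: "\<And>x. GDERIV F x :> g x"
    and lipschitz: "\<And>x y. norm (g x - g y) \<le> L * norm (x - y)"
  shows "F y \<le> F x + g x \<bullet> (y - x) + L / 2 * (norm (y - x))\<^sup>2"
proof -
  let ?d = "y - x"
  let ?f' = "\<lambda>t. ?d \<bullet> g (x + t *\<^sub>R ?d)"
  have "((\<lambda>t. F (x + t *\<^sub>R ?d)) has_real_derivative ?f' t) (at t)" for t
  proof -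
    have "(F has_derivative (\<lambda>h. h \<bullet> g (x + t *\<^sub>R ?d))) (at (x + t *\<^sub>R ?d))"
      using grad by (simp add: gderiv_def)
    from has_real_derivative_along_line[OF this bounded_linear_inner_left] show ?thesis .
  qed
  moreover have "?f' t - ?f' 0 \<le> (L * (norm ?d)\<^sup>2) * t" if "0 \<le> t" for t
  proof -
    have "?f' t - ?f' 0 = ?d \<bullet> (g (x + t *\<^sub>R ?d) - g x)" by (simp add: inner_diff_right)
    also have "\<dots> \<le> norm ?d * norm (g (x + t *\<^sub>R ?d) - g x)" by (rule norm_cauchy_schwarz)
    also have "\<dots> \<le> norm ?d * (L * norm (t *\<^sub>R ?d))"
      using lipschitz[of "x + t *\<^sub>R ?d" x] by (intro mult_left_mono) auto
    also have "\<dots> = (L * (norm ?d)\<^sup>2) * t" using that by (simp add: power2_eq_square)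
    finally show ?thesis .
  qed
  ultimately have "F (x + 1 *\<^sub>R ?d) - F (x + 0 *\<^sub>R ?d) - ?f' 0 \<le> L * (norm ?d)\<^sup>2 / 2"
    by (intro quadratic_upper_bound_from_derivative) auto
  then show ?thesis by (simp add: inner_commute)
qed

lemma gradient_sq_le_suboptimality:
  fixes F :: "'a::real_inner \<Rightarrow> real"
  assumes grad: "\<And>x. GDERIV F x :> g x"
    and lipschitz: "\<And>x y. norm (g x - g y) \<le> L * norm (x - y)"
    and L: "L > 0" and minimum: "\<And>x. F x\<^sub>0 \<le> F x"
  shows "(norm (g x))\<^sup>2 \<le> 2 * L * (F x - F x\<^sub>0)"
proof -
  let ?y = "x - (1 / L) *\<^sub>R g x"
  have "F x\<^sub>0 \<le> F ?y" by (rule minimum)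
  also have "\<dots> \<le> F x + g x \<bullet> (?y - x) + L / 2 * (norm (?y - x))\<^sup>2"
    by (rule smooth_descent_lemma[OF grad lipschitz])
  also have "\<dots> = F x - (norm (g x))\<^sup>2 / (2 * L)"
    using L by (simp add: field_simps power2_eq_square flip: power2_norm_eq_inner)
  finally show ?thesis using L by (simp add: field_simps)
qed

lemma norm_add_sq_le_weighted:
  fixes p e :: "'a::real_normed_vector"
  assumes "\<epsilon> > 0"
  shows "(norm (p + e))\<^sup>2 \<le> (1 + \<epsilon>) * (norm p)\<^sup>2 + (1 + 1 / \<epsilon>) * (norm e)\<^sup>2"
proof -
  have "(norm (p + e))\<^sup>2 \<le> (norm p + norm e)\<^sup>2"
    by (simp add: norm_triangle_ineq power_mono)
  also have "\<dots> = (1 + \<epsilon>) * (norm p)\<^sup>2 + (1 + 1 / \<epsilon>) * (norm e)\<^sup>2 - (\<epsilon> * norm p - norm e)\<^sup>2 / \<epsilon>"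
    using assms by (simp add: field_simps power2_eq_square)
  also have "\<dots> \<le> (1 + \<epsilon>) * (norm p)\<^sup>2 + (1 + 1 / \<epsilon>) * (norm e)\<^sup>2"
    using assms by simp
  finally show ?thesis .
qed

lemma norm_add3_sq_le:
  fixes p q r :: "'a::real_normed_vector"
  shows "(norm (p + q + r))\<^sup>2 \<le> 3 * ((norm p)\<^sup>2 + (norm q)\<^sup>2 + (norm r)\<^sup>2)"
proof -
  have "norm (p + q + r) \<le> norm p + norm q + norm r"
    by (metis add_right_mono norm_triangle_ineq order_trans)
  then have "(norm (p + q + r))\<^sup>2 \<le> (norm p + norm q + norm r)\<^sup>2"
    by (simp add: power_mono)
  also have "\<dots> \<le> 3 * ((norm p)\<^sup>2 + (norm q)\<^sup>2 + (norm r)\<^sup>2)"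
    by (smt (verit) power2_diff power2_sum zero_le_power2)
  finally show ?thesis .
qed

lemma perturbed_gradient_step_sq_le:
  fixes x g e :: "'a::real_inner"
  assumes eps: "\<epsilon> > 0" and a: "a \<ge> 0" and gap: "0 \<le> \<Delta>" "\<Delta> \<le> g \<bullet> x"
    and grad_sq: "(norm g)\<^sup>2 \<le> 2 * L * \<Delta>" and step: "a * L \<le> \<alpha>"
  shows "(norm (x - a *\<^sub>R g + e))\<^sup>2
    \<le> (1 + \<epsilon>) * ((norm x)\<^sup>2 - 2 * a * (1 - \<alpha>) * \<Delta>) + (1 + 1 / \<epsilon>) * (norm e)\<^sup>2"
proof -
  have "(norm (x - a *\<^sub>R g))\<^sup>2 = (norm x)\<^sup>2 - 2 * a * (g \<bullet> x) + a\<^sup>2 * (norm g)\<^sup>2"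
    unfolding power2_norm_eq_inner
    by (simp add: inner_diff_left inner_diff_right inner_commute power2_eq_square algebra_simps)
  also have "\<dots> \<le> (norm x)\<^sup>2 - 2 * a * \<Delta> + a * (2 * (a * L) * \<Delta>)"
  proof -
    have "2 * a * \<Delta> \<le> 2 * a * (g \<bullet> x)" using a gap by (simp add: mult_left_mono)
    moreover have "a\<^sup>2 * (norm g)\<^sup>2 \<le> a\<^sup>2 * (2 * L * \<Delta>)" using grad_sq by (simp add: mult_left_mono)
    ultimately show ?thesis by (simp add: power2_eq_square algebra_simps)
  qed
  also have "\<dots> \<le> (norm x)\<^sup>2 - 2 * a * \<Delta> + a * (2 * \<alpha> * \<Delta>)"
    using a gap step by (intro add_left_mono mult_left_mono mult_right_mono) auto
  finally have descent: "(norm (x - a *\<^sub>R g))\<^sup>2 \<le> (norm x)\<^sup>2 - 2 * a * (1 - \<alpha>) * \<Delta>"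
    by (simp add: algebra_simps)
  have "(norm (x - a *\<^sub>R g + e))\<^sup>2 \<le> (1 + \<epsilon>) * (norm (x - a *\<^sub>R g))\<^sup>2 + (1 + 1 / \<epsilon>) * (norm e)\<^sup>2"
    by (rule norm_add_sq_le_weighted[OF eps])
  also have "\<dots> \<le> (1 + \<epsilon>) * ((norm x)\<^sup>2 - 2 * a * (1 - \<alpha>) * \<Delta>) + (1 + 1 / \<epsilon>) * (norm e)\<^sup>2"
    using descent eps by (intro add_right_mono mult_left_mono) auto
  finally show ?thesis .
qed

lemma regularized_minimizer_bounds:
  fixes Hm :: "nat \<Rightarrow> real^'d^'c"
  assumes n: "n \<ge> 1" and eps: "\<epsilon> \<noteq> 0"
    and minimizer: "\<And>u. Psi_obj n \<eta> a Hm g \<epsilon> v \<le> Psi_obj n \<eta> a Hm g \<epsilon> u"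
    and comparison: "(norm u)\<^sup>2 \<le> V" "Phi_obj n \<eta> a Hm g u \<le> \<epsilon>\<^sup>2"
  shows "(norm v)\<^sup>2 \<le> 2 + V"
    and "(\<Sum>i=1..n. (norm (\<eta> *\<^sub>R (Hm i *v v) - a i *\<^sub>R g i))\<^sup>2) \<le> real n * (2 + V) * \<epsilon>\<^sup>2"
proof -
  let ?R = "\<Sum>i=1..n. (norm (\<eta> *\<^sub>R (Hm i *v v) - a i *\<^sub>R g i))\<^sup>2"
  have "?R / (2 * real n) + \<epsilon>\<^sup>2 / 2 * (norm v)\<^sup>2 \<le> Phi_obj n \<eta> a Hm g u + \<epsilon>\<^sup>2 / 2 * (norm u)\<^sup>2"
    using minimizer[of u] by (simp add: Psi_obj_def Phi_obj_def)
  also have "\<dots> \<le> \<epsilon>\<^sup>2 + \<epsilon>\<^sup>2 / 2 * V"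
    using comparison by (intro add_mono mult_left_mono) auto
  finally have total: "?R / (2 * real n) + \<epsilon>\<^sup>2 / 2 * (norm v)\<^sup>2 \<le> \<epsilon>\<^sup>2 * (2 + V) / 2"
    by (simp add: field_simps)
  have "?R / (2 * real n) \<ge> 0" by (simp add: sum_nonneg)
  with total have "\<epsilon>\<^sup>2 / 2 * (norm v)\<^sup>2 \<le> \<epsilon>\<^sup>2 / 2 * (2 + V)"
    by simp
  then show "(norm v)\<^sup>2 \<le> 2 + V"
    using eps by (simp add: mult_le_cancel_left_pos)
  have "\<epsilon>\<^sup>2 / 2 * (norm v)\<^sup>2 \<ge> 0" by simp
  with total have "?R / (2 * real n) \<le> \<epsilon>\<^sup>2 * (2 + V) / 2"
    by linarith
  then show "?R \<le> real n * (2 + V) * \<epsilon>\<^sup>2"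
    using n by (simp add: field_simps)
qed

lemma discounted_descent_sum_le:
  fixes S \<Delta> :: "nat \<Rightarrow> real"
  assumes eps: "\<epsilon> > 0" and M: "M \<ge> 0" and S: "\<And>t. S t \<ge> 0"
    and step: "\<And>t. t < T \<Longrightarrow>
      S (Suc t) \<le> (1 + \<epsilon>) * (S t - (1 + \<epsilon>) ^ t * k * \<Delta> t) + (1 + 1 / \<epsilon>) * M"
  shows "k * (\<Sum>t<T. \<Delta> t) \<le> S 0 + real T * (M / \<epsilon>)"
proof -
  have discounted_step: "S (Suc t) / (1 + \<epsilon>) ^ Suc t \<le> S t / (1 + \<epsilon>) ^ t - k * \<Delta> t + M / \<epsilon>"
    if t: "t < T" for t
  proof -
    define q where "q = (1 + \<epsilon>) ^ t"
    have q: "q \<ge> 1" unfolding q_def using eps by simp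
    have "S (Suc t) / (1 + \<epsilon>) ^ Suc t
        \<le> ((1 + \<epsilon>) * (S t - q * k * \<Delta> t) + (1 + 1 / \<epsilon>) * M) / ((1 + \<epsilon>) * q)"
      using step[OF t] eps unfolding q_def power_Suc by (intro divide_right_mono) auto
    also have "\<dots> = (1 + \<epsilon>) * (S t - q * k * \<Delta> t + M / \<epsilon>) / ((1 + \<epsilon>) * q)"
      using eps by (simp add: field_simps)
    also have "\<dots> = S t / q - k * \<Delta> t + M / \<epsilon> / q"
      using eps q by (simp add: add_divide_distrib diff_divide_distrib)
    also have "M / \<epsilon> / q \<le> M / \<epsilon>"
      using eps q M by (simp add: field_simps mult_le_cancel_left1)
    finally show ?thesis unfolding q_def by simp
  qed
  have telescoped: "S m / (1 + \<epsilon>) ^ m + k * (\<Sum>t<m. \<Delta> t) \<le> S 0 + real m * (M / \<epsilon>)"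
    if "m \<le> T" for m
    using that
  proof (induction m)
    case (Suc m)
    with discounted_step[of m] show ?case by (simp add: algebra_simps)
  qed simp
  have "S T / (1 + \<epsilon>) ^ T \<ge> 0" using S[of T] eps by simp
  with telescoped[of T] show ?thesis by simp
qed

lemma geometric_schedule_le_exp:
  fixes \<epsilon> \<beta> :: real
  assumes eps: "\<epsilon> > 0" and horizon: "real T = \<beta> / \<epsilon>" and t: "t \<le> T"
  shows "(1 + \<epsilon>) ^ t \<le> exp \<beta>"
proof -
  have "(1 + \<epsilon>) ^ t \<le> exp \<epsilon> ^ t"
    using eps exp_ge_add_one_self[of \<epsilon>] by (intro power_mono) auto
  also have "\<dots> = exp (real t * \<epsilon>)" by (simp add: exp_of_nat_mult)
  also have "real t * \<epsilon> \<le> \<beta>"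
    using t eps horizon mult_right_mono[of "real t" "real T" \<epsilon>] by simp
  finally show ?thesis by simp
qed

lemma averaged_rate_bound:
  fixes E \<alpha> \<beta> \<epsilon> S\<^sub>0 K K' :: real and \<Delta> :: "nat \<Rightarrow> real" and n T :: nat
  assumes E: "E > 0" and alpha: "0 < \<alpha>" "\<alpha> < 1 / 4" and eps: "\<epsilon> > 0" and beta: "\<beta> > 0"
    and horizon: "real T = \<beta> / \<epsilon>" and n: "n \<ge> 1"
    and S\<^sub>0: "S\<^sub>0 \<ge> 0" and K: "0 \<le> K" "K \<le> K'"
    and sum: "2 * (1 - \<alpha>) * \<alpha> / E * (\<Sum>t<T. \<Delta> t) \<le> S\<^sub>0 + real T * (3 * real n * K * \<epsilon>\<^sup>2 / \<epsilon>)"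
  shows "(1 / real T) * (\<Sum>t<T. (1 / real n) * \<Delta> t)
    \<le> E * (1 + \<epsilon>) / (2 * (1 - 4 * \<alpha>) * \<alpha> * \<beta>) * ((1 / real n) * S\<^sub>0) * \<epsilon>
      + E * (4 * \<epsilon> + 3) / (2 * \<alpha> * (1 - 4 * \<alpha>)) * K' * \<epsilon>"
proof -
  have T: "real T * \<epsilon> = \<beta>" "real T > 0" using horizon eps beta by auto
  have a: "1 - \<alpha> > 0" "1 - 4 * \<alpha> > 0" using alpha by auto
  have sum': "(\<Sum>t<T. \<Delta> t) \<le> (S\<^sub>0 + real T * (3 * real n * K * \<epsilon>)) * (E / (2 * (1 - \<alpha>) * \<alpha>))"
    using sum E alpha a eps by (simp add: field_simps power2_eq_square)
  have "(1 / real T) * (\<Sum>t<T. (1 / real n) * \<Delta> t) = (\<Sum>t<T. \<Delta> t) / (real T * real n)"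
    by (simp add: sum_divide_distrib[symmetric])
  also have "\<dots> \<le> (S\<^sub>0 + real T * (3 * real n * K * \<epsilon>)) * (E / (2 * (1 - \<alpha>) * \<alpha>)) / (real T * real n)"
    using sum' T n by (intro divide_right_mono) auto
  also have "\<dots> = E / (2 * \<alpha> * \<beta>) * (S\<^sub>0 / real n) * \<epsilon> * (1 / (1 - \<alpha>))
        + E / (2 * \<alpha>) * K * \<epsilon> * (3 / (1 - \<alpha>))"
  proof -
    \<comment> \<open>naming \<open>1 - \<alpha>\<close> lets \<open>field_simps\<close> see that it is nonzero\<close>
    obtain u where u: "1 - \<alpha> = u" "u > 0" using a by simp
    show ?thesis using T n alpha eps u(2) unfolding u by (simp add: field_simps flip: T(1))
  qed
  also have "\<dots> \<le> E / (2 * \<alpha> * \<beta>) * (S\<^sub>0 / real n) * \<epsilon> * ((1 + \<epsilon>) / (1 - 4 * \<alpha>))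
        + E / (2 * \<alpha>) * K' * \<epsilon> * ((4 * \<epsilon> + 3) / (1 - 4 * \<alpha>))"
  proof (intro add_mono mult_mono)
    show "1 / (1 - \<alpha>) \<le> (1 + \<epsilon>) / (1 - 4 * \<alpha>)" "3 / (1 - \<alpha>) \<le> (4 * \<epsilon> + 3) / (1 - 4 * \<alpha>)"
      using a alpha eps by (simp_all add: frac_le)
  qed (use E alpha beta eps S\<^sub>0 K n in auto)
  also have "\<dots> = E * (1 + \<epsilon>) / (2 * (1 - 4 * \<alpha>) * \<alpha> * \<beta>) * ((1 / real n) * S\<^sub>0) * \<epsilon>
      + E * (4 * \<epsilon> + 3) / (2 * \<alpha> * (1 - 4 * \<alpha>)) * K' * \<epsilon>"
    by (simp add: mult_ac)
  finally show ?thesis .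
qed

locale composite_objective =
  fixes n :: nat
    and h :: "nat \<Rightarrow> real^'d \<Rightarrow> real^'c"
    and Jh :: "nat \<Rightarrow> real^'d \<Rightarrow> real^'d^'c"
    and Hh :: "nat \<Rightarrow> 'c \<Rightarrow> real^'d \<Rightarrow> real^'d^'d"
    and \<phi> :: "nat \<Rightarrow> real^'c \<Rightarrow> real"
    and g\<phi> :: "nat \<Rightarrow> real^'c \<Rightarrow> real^'c"
    and hstar :: "nat \<Rightarrow> real^'c"
    and L\<phi> G :: real
  assumes n_pos: "n \<ge> 1"
    and hstar_min: "\<And>i x. i \<in> {1..n} \<Longrightarrow> \<phi> i (hstar i) \<le> \<phi> i x"
    and convex: "\<And>i. i \<in> {1..n} \<Longrightarrow> convex_on UNIV (\<phi> i)"
    and grad: "\<And>i x. i \<in> {1..n} \<Longrightarrow> GDERIV (\<phi> i) x :> g\<phi> i x"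
    and L_pos: "L\<phi> > 0"
    and smooth: "\<And>i x y. i \<in> {1..n} \<Longrightarrow> norm (g\<phi> i x - g\<phi> i y) \<le> L\<phi> * norm (x - y)"
    and jac: "\<And>i w. i \<in> {1..n} \<Longrightarrow> (h i has_derivative (\<lambda>u. Jh i w *v u)) (at w)"
    and hess: "\<And>i j w. i \<in> {1..n} \<Longrightarrow> ((\<lambda>x. Jh i x $ j) has_derivative (\<lambda>u. Hh i j w *v u)) (at w)"
    and hess_bound: "\<And>i j w. i \<in> {1..n} \<Longrightarrow> onorm (\<lambda>u. Hh i j w *v u) \<le> G"
begin

definition dist_sq_sum :: "real^'d \<Rightarrow> real" where
  "dist_sq_sum w = (\<Sum>i=1..n. (norm (h i w - hstar i))\<^sup>2)"

definition excess_loss_sum :: "real^'d \<Rightarrow> real" where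
  "excess_loss_sum w = (\<Sum>i=1..n. \<phi> i (h i w) - \<phi> i (hstar i))"

lemma G_nonneg: "G \<ge> 0"
  using onorm_pos_le[OF matrix_vector_mul_bounded_linear] hess_bound n_pos
  by (meson atLeastAtMost_iff order_refl order_trans)

lemma linearized_step_error_le:
  fixes w v v\<^sub>r :: "real^'d"
  assumes eps: "\<epsilon> > 0" and D: "D \<ge> 0"
    and close: "norm (v - v\<^sub>r) \<le> \<epsilon>"
    and jac_bound: "\<And>i. i \<in> {1..n} \<Longrightarrow> onorm (\<lambda>u. Jh i w *v u) \<le> H / sqrt \<epsilon>"
    and v\<^sub>r_bound: "(norm v\<^sub>r)\<^sup>2 \<le> 2 + V"
    and residual: "(\<Sum>i=1..n. (norm ((D * sqrt \<epsilon>) *\<^sub>R (Jh i w *v v\<^sub>r) - a *\<^sub>R g\<phi> i (h i w)))\<^sup>2)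
      \<le> real n * (2 + V) * \<epsilon>\<^sup>2"
  shows "(\<Sum>i=1..n. (norm (h i (w - (D * sqrt \<epsilon>) *\<^sub>R v) - h i w + a *\<^sub>R g\<phi> i (h i w)))\<^sup>2)
    \<le> 3 * real n * (D\<^sup>2 * H\<^sup>2 + real CARD('c) * ((V + \<epsilon>\<^sup>2 + 2) * G * D\<^sup>2)\<^sup>2 + 2 + V) * \<epsilon>\<^sup>2"
proof -
  define \<eta> where "\<eta> = D * sqrt \<epsilon>"
  define X where "X = (V + \<epsilon>\<^sup>2 + 2) * G * D\<^sup>2"
  define c where "c = real CARD('c)"
  define ereg where "ereg i = \<eta> *\<^sub>R (Jh i w *v v\<^sub>r) - a *\<^sub>R g\<phi> i (h i w)" for i
  define r where "r i = h i (w + (- \<eta> *\<^sub>R v)) - h i w - Jh i w *v (- \<eta> *\<^sub>R v)" for i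
  define d where "d i = \<eta> *\<^sub>R (Jh i w *v (v - v\<^sub>r))" for i
  have \<eta>: "\<eta> \<ge> 0" "\<eta>\<^sup>2 = D\<^sup>2 * \<epsilon>" using D eps by (simp_all add: \<eta>_def power_mult_distrib)
  have "norm v \<le> norm v\<^sub>r + \<epsilon>"
    using close norm_triangle_ineq[of "v - v\<^sub>r" v\<^sub>r] by simp
  then have "(norm v)\<^sup>2 \<le> 2 * (norm v\<^sub>r)\<^sup>2 + 2 * \<epsilon>\<^sup>2"
    using sum_squares_bound[of "norm v\<^sub>r" \<epsilon>] power_mono[of "norm v" "norm v\<^sub>r + \<epsilon>" 2]
    by (simp add: power2_sum)
  then have v_bound: "(norm v)\<^sup>2 \<le> 2 * (V + \<epsilon>\<^sup>2 + 2)"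
    using v\<^sub>r_bound by simp
  have "G / 2 * (norm (- \<eta> *\<^sub>R v))\<^sup>2 = G / 2 * D\<^sup>2 * \<epsilon> * (norm v)\<^sup>2"
    using \<eta> by (simp add: power_mult_distrib)
  also have "\<dots> \<le> G / 2 * D\<^sup>2 * \<epsilon> * (2 * (V + \<epsilon>\<^sup>2 + 2))"
    using v_bound G_nonneg eps by (intro mult_left_mono) auto
  finally have step_bound: "G / 2 * (norm (- \<eta> *\<^sub>R v))\<^sup>2 \<le> X * \<epsilon>"
    by (simp add: X_def algebra_simps)
  have r_bound: "(norm (r i))\<^sup>2 \<le> c * X\<^sup>2 * \<epsilon>\<^sup>2" if i: "i \<in> {1..n}" for i
  proof -
    have "(norm (r i))\<^sup>2 \<le> c * (G / 2 * (norm (- \<eta> *\<^sub>R v))\<^sup>2)\<^sup>2"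
      unfolding r_def c_def by (rule taylor_remainder_sq_le[OF jac[OF i] hess[OF i] hess_bound[OF i]])
    also have "\<dots> \<le> c * (X * \<epsilon>)\<^sup>2"
      using step_bound G_nonneg by (intro mult_left_mono power_mono) (auto simp: c_def)
    finally show ?thesis by (simp add: power_mult_distrib)
  qed
  have d_bound: "(norm (d i))\<^sup>2 \<le> D\<^sup>2 * H\<^sup>2 * \<epsilon>\<^sup>2" if i: "i \<in> {1..n}" for i
  proof -
    have "norm (d i) \<le> \<eta> * (onorm (\<lambda>u. Jh i w *v u) * norm (v - v\<^sub>r))"
      unfolding d_def using \<eta> by (simp add: mult_left_mono onorm)
    also have "\<dots> \<le> \<eta> * (H / sqrt \<epsilon> * \<epsilon>)"
      using jac_bound[OF i] close onorm_pos_le[OF matrix_vector_mul_bounded_linear] \<eta>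
      by (intro mult_left_mono mult_mono) (auto intro: order_trans)
    also have "\<dots> = D * H * \<epsilon>"
      using eps by (simp add: \<eta>_def)
    finally have "(norm (d i))\<^sup>2 \<le> (D * H * \<epsilon>)\<^sup>2"
      by (simp add: power_mono)
    then show ?thesis by (simp add: power_mult_distrib)
  qed
  have "h i (w - \<eta> *\<^sub>R v) - h i w + a *\<^sub>R g\<phi> i (h i w) = r i + - ereg i + - d i" for i
    by (simp add: r_def ereg_def d_def matrix_vector_mult_diff_distrib matrix_vector_mult_scaleR
        linear_neg[OF matrix_vector_mul_linear] algebra_simps)
  then have "(\<Sum>i=1..n. (norm (h i (w - \<eta> *\<^sub>R v) - h i w + a *\<^sub>R g\<phi> i (h i w)))\<^sup>2)
      \<le> (\<Sum>i=1..n. 3 * ((norm (r i))\<^sup>2 + (norm (ereg i))\<^sup>2 + (norm (d i))\<^sup>2))"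
    by (metis (no_types, lifting) norm_add3_sq_le norm_minus_cancel sum_mono)
  also have "\<dots> \<le> (\<Sum>i=1..n. 3 * (c * X\<^sup>2 * \<epsilon>\<^sup>2 + (norm (ereg i))\<^sup>2 + D\<^sup>2 * H\<^sup>2 * \<epsilon>\<^sup>2))"
    using r_bound d_bound by (intro sum_mono) (simp add: add_mono)
  also have "\<dots> = 3 * (real n * (c * X\<^sup>2 * \<epsilon>\<^sup>2) + (\<Sum>i=1..n. (norm (ereg i))\<^sup>2) + real n * (D\<^sup>2 * H\<^sup>2 * \<epsilon>\<^sup>2))"
    by (simp add: sum.distrib sum_distrib_left[symmetric])
  also have "\<dots> \<le> 3 * real n * (D\<^sup>2 * H\<^sup>2 + c * X\<^sup>2 + 2 + V) * \<epsilon>\<^sup>2"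
    using residual by (simp add: ereg_def \<eta>_def algebra_simps)
  finally show ?thesis by (simp add: \<eta>_def X_def c_def)
qed

lemma dist_sq_sum_step:
  fixes w v v\<^sub>r v\<^sub>h :: "real^'d"
  assumes eps: "\<epsilon> > 0" and D: "D \<ge> 0" and a: "a \<ge> 0" "a * L\<phi> \<le> \<alpha>"
    and close: "norm (v - v\<^sub>r) \<le> \<epsilon>"
    and jac_bound: "\<And>i. i \<in> {1..n} \<Longrightarrow> onorm (\<lambda>u. Jh i w *v u) \<le> H / sqrt \<epsilon>"
    and minimizer: "\<And>u. Psi_obj n (D * sqrt \<epsilon>) (\<lambda>i. a) (\<lambda>i. Jh i w) (\<lambda>i. g\<phi> i (h i w)) \<epsilon> v\<^sub>r
      \<le> Psi_obj n (D * sqrt \<epsilon>) (\<lambda>i. a) (\<lambda>i. Jh i w) (\<lambda>i. g\<phi> i (h i w)) \<epsilon> u"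
    and comparison: "(norm v\<^sub>h)\<^sup>2 \<le> V"
      "Phi_obj n (D * sqrt \<epsilon>) (\<lambda>i. a) (\<lambda>i. Jh i w) (\<lambda>i. g\<phi> i (h i w)) v\<^sub>h \<le> \<epsilon>\<^sup>2"
  shows "dist_sq_sum (w - (D * sqrt \<epsilon>) *\<^sub>R v)
    \<le> (1 + \<epsilon>) * (dist_sq_sum w - 2 * a * (1 - \<alpha>) * excess_loss_sum w)
      + (1 + 1 / \<epsilon>) * (3 * real n * (D\<^sup>2 * H\<^sup>2 + real CARD('c) * ((V + \<epsilon>\<^sup>2 + 2) * G * D\<^sup>2)\<^sup>2 + 2 + V) * \<epsilon>\<^sup>2)"
proof -
  define e where "e i = h i (w - (D * sqrt \<epsilon>) *\<^sub>R v) - h i w + a *\<^sub>R g\<phi> i (h i w)" for i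
  note regularized = regularized_minimizer_bounds[OF n_pos _ minimizer comparison]
  have error: "(\<Sum>i=1..n. (norm (e i))\<^sup>2)
      \<le> 3 * real n * (D\<^sup>2 * H\<^sup>2 + real CARD('c) * ((V + \<epsilon>\<^sup>2 + 2) * G * D\<^sup>2)\<^sup>2 + 2 + V) * \<epsilon>\<^sup>2"
    unfolding e_def using eps regularized
    by (intro linearized_step_error_le[OF eps D close jac_bound]) auto
  have "(norm (h i (w - (D * sqrt \<epsilon>) *\<^sub>R v) - hstar i))\<^sup>2
      \<le> (1 + \<epsilon>) * ((norm (h i w - hstar i))\<^sup>2 - 2 * a * (1 - \<alpha>) * (\<phi> i (h i w) - \<phi> i (hstar i)))
        + (1 + 1 / \<epsilon>) * (norm (e i))\<^sup>2" if i: "i \<in> {1..n}" for i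
  proof -
    have decomposition:
      "h i (w - (D * sqrt \<epsilon>) *\<^sub>R v) - hstar i = (h i w - hstar i) - a *\<^sub>R g\<phi> i (h i w) + e i"
      by (simp add: e_def)
    have "\<phi> i (h i w) - \<phi> i (hstar i) \<le> g\<phi> i (h i w) \<bullet> (h i w - hstar i)"
      using convex_gradient_inequality[OF convex[OF i] grad[OF i], of "h i w" "hstar i"]
      by (simp add: inner_diff_right)
    moreover have "0 \<le> \<phi> i (h i w) - \<phi> i (hstar i)"
      using hstar_min[OF i] by simp
    ultimately show ?thesis unfolding decomposition
      by (intro perturbed_gradient_step_sq_le[OF eps a(1) _ _ _ a(2)]
          gradient_sq_le_suboptimality[OF grad[OF i] smooth[OF i] L_pos hstar_min[OF i]])
  qed
  then have "dist_sq_sum (w - (D * sqrt \<epsilon>) *\<^sub>R v)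
      \<le> (\<Sum>i=1..n. (1 + \<epsilon>) * ((norm (h i w - hstar i))\<^sup>2
          - 2 * a * (1 - \<alpha>) * (\<phi> i (h i w) - \<phi> i (hstar i))) + (1 + 1 / \<epsilon>) * (norm (e i))\<^sup>2)"
    unfolding dist_sq_sum_def by (rule sum_mono)
  also have "\<dots> = (1 + \<epsilon>) * (dist_sq_sum w - 2 * a * (1 - \<alpha>) * excess_loss_sum w)
      + (1 + 1 / \<epsilon>) * (\<Sum>i=1..n. (norm (e i))\<^sup>2)"
    unfolding dist_sq_sum_def excess_loss_sum_def
    by (simp add: sum.distrib sum_distrib_left sum_subtractf right_diff_distrib)
  also have "\<dots> \<le> (1 + \<epsilon>) * (dist_sq_sum w - 2 * a * (1 - \<alpha>) * excess_loss_sum w)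
      + (1 + 1 / \<epsilon>) * (3 * real n * (D\<^sup>2 * H\<^sup>2 + real CARD('c) * ((V + \<epsilon>\<^sup>2 + 2) * G * D\<^sup>2)\<^sup>2 + 2 + V) * \<epsilon>\<^sup>2)"
    using error eps by (intro add_left_mono mult_left_mono) auto
  finally show ?thesis .
qed

end

theorem mainTheorem17:
  fixes n :: nat
    and h :: "nat \<Rightarrow> real^'d \<Rightarrow> real^'c"
    and Jh :: "nat \<Rightarrow> real^'d \<Rightarrow> real^'d^'c"
    and Hh :: "nat \<Rightarrow> 'c \<Rightarrow> real^'d \<Rightarrow> real^'d^'d"
    and \<phi> :: "nat \<Rightarrow> real^'c \<Rightarrow> real"
    and g\<phi> :: "nat \<Rightarrow> real^'c \<Rightarrow> real^'c"
    and hstar :: "nat \<Rightarrow> real^'c"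
    and L\<phi> G V H D \<epsilon> \<beta> \<alpha> :: real
    and T :: nat
    and w :: "nat \<Rightarrow> real^'d"
    and v vreg :: "nat \<Rightarrow> real^'d"
  assumes n_pos: "n \<ge> 1"
    and hstar_min: "\<And>i x. i \<in> {1..n} \<Longrightarrow> \<phi> i (hstar i) \<le> \<phi> i x"
    \<comment> \<open>Assumption A\<close>
    and A_convex: "\<And>i. i \<in> {1..n} \<Longrightarrow> convex_on UNIV (\<phi> i)"
    and A_bdd: "\<And>i. i \<in> {1..n} \<Longrightarrow> bdd_below (range (\<phi> i))"
    and A_grad: "\<And>i x. i \<in> {1..n} \<Longrightarrow> GDERIV (\<phi> i) x :> g\<phi> i x"
    and A_Lpos: "L\<phi> > 0"
    and A_smooth: "\<And>i x y. i \<in> {1..n} \<Longrightarrow> norm (g\<phi> i x - g\<phi> i y) \<le> L\<phi> * norm (x - y)"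
    \<comment> \<open>Assumption B, with Jacobian Jh and component Hessians Hh\<close>
    and B_jac: "\<And>i w. i \<in> {1..n} \<Longrightarrow> (h i has_derivative (\<lambda>u. Jh i w *v u)) (at w)"
    and B_hess: "\<And>i j w. i \<in> {1..n} \<Longrightarrow> ((\<lambda>x. Jh i x $ j) has_derivative (\<lambda>u. Hh i j w *v u)) (at w)"
    and B_cont: "\<And>i j. i \<in> {1..n} \<Longrightarrow> continuous_on UNIV (Hh i j)"
    and B_Gpos: "G > 0"
    and B_bound: "\<And>i j w. i \<in> {1..n} \<Longrightarrow> onorm (\<lambda>u. Hh i j w *v u) \<le> G"
    and eps_pos: "\<epsilon> > 0"
    and beta_pos: "\<beta> > 0"
    and T_def: "real T = \<beta> / \<epsilon>"
    and D_pos: "D > 0"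
    and alpha_range: "0 < \<alpha>" "\<alpha> < 1 / 4"
    \<comment> \<open>Algorithm 2 with eta^(t) = D sqrt eps, alpha_i^(t) = (1+eps)^t alpha/(e^beta L_phi)\<close>
    and vreg_min: "\<And>t u. t < T \<Longrightarrow>
       Psi_obj n (D * sqrt \<epsilon>) (\<lambda>i. (1 + \<epsilon>) ^ t * \<alpha> / (exp \<beta> * L\<phi>))
         (\<lambda>i. Jh i (w t)) (\<lambda>i. g\<phi> i (h i (w t))) \<epsilon> (vreg t)
       \<le> Psi_obj n (D * sqrt \<epsilon>) (\<lambda>i. (1 + \<epsilon>) ^ t * \<alpha> / (exp \<beta> * L\<phi>))
         (\<lambda>i. Jh i (w t)) (\<lambda>i. g\<phi> i (h i (w t))) \<epsilon> u"
    and v_approx: "\<And>t. t < T \<Longrightarrow> norm (v t - vreg t) \<le> \<epsilon>"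
    and w_step: "\<And>t. t < T \<Longrightarrow> w (Suc t) = w t - (D * sqrt \<epsilon>) *\<^sub>R v t"
    \<comment> \<open>Assumption C\<close>
    and C_V: "V > 0"
    and C_assm: "\<And>t. t < T \<Longrightarrow> \<exists>vh. (norm vh)\<^sup>2 \<le> V \<and>
       Phi_obj n (D * sqrt \<epsilon>) (\<lambda>i. (1 + \<epsilon>) ^ t * \<alpha> / (exp \<beta> * L\<phi>))
         (\<lambda>i. Jh i (w t)) (\<lambda>i. g\<phi> i (h i (w t))) vh \<le> \<epsilon>\<^sup>2"
    \<comment> \<open>Assumption D\<close>
    and D_H: "H > 0"
    and D_assm: "\<And>i t. i \<in> {1..n} \<Longrightarrow> t < T \<Longrightarrow> onorm (\<lambda>u. Jh i (w t) *v u) \<le> H / sqrt \<epsilon>"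
  shows "(1 / real T) * (\<Sum>t<T. (1 / real n) * (\<Sum>i=1..n. \<phi> i (h i (w t)) - \<phi> i (hstar i)))
    \<le> exp \<beta> * L\<phi> * (1 + \<epsilon>) / (2 * (1 - 4 * \<alpha>) * \<alpha> * \<beta>)
        * ((1 / real n) * (\<Sum>i=1..n. (norm (h i (w 0) - hstar i))\<^sup>2)) * \<epsilon>
      + exp \<beta> * L\<phi> * (4 * \<epsilon> + 3) / (2 * \<alpha> * (1 - 4 * \<alpha>))
        * (D\<^sup>2 * H\<^sup>2 + real CARD('c) * (2 + (V + \<epsilon>\<^sup>2 + 2) * G * D\<^sup>2)\<^sup>2 + 2 + V) * \<epsilon>"
proof -
  interpret composite_objective n h Jh Hh \<phi> g\<phi> hstar L\<phi> G
    by unfold_locales (fact n_pos hstar_min A_convex A_grad A_Lpos A_smooth B_jac B_hess B_bound)+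
  define K where "K = D\<^sup>2 * H\<^sup>2 + real CARD('c) * ((V + \<epsilon>\<^sup>2 + 2) * G * D\<^sup>2)\<^sup>2 + 2 + V"
  define k where "k = 2 * (1 - \<alpha>) * \<alpha> / (exp \<beta> * L\<phi>)"
  have step: "dist_sq_sum (w (Suc t)) \<le> (1 + \<epsilon>) * (dist_sq_sum (w t) - (1 + \<epsilon>) ^ t * k * excess_loss_sum (w t))
      + (1 + 1 / \<epsilon>) * (3 * real n * K * \<epsilon>\<^sup>2)" if t: "t < T" for t
  proof -
    define a where "a = (1 + \<epsilon>) ^ t * \<alpha> / (exp \<beta> * L\<phi>)"
    obtain v\<^sub>h where "(norm v\<^sub>h)\<^sup>2 \<le> V"
      "Phi_obj n (D * sqrt \<epsilon>) (\<lambda>i. a) (\<lambda>i. Jh i (w t)) (\<lambda>i. g\<phi> i (h i (w t))) v\<^sub>h \<le> \<epsilon>\<^sup>2"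
      using C_assm[OF t] unfolding a_def by blast
    moreover have "a * L\<phi> \<le> \<alpha>"
      using geometric_schedule_le_exp[OF eps_pos T_def, of t] t alpha_range A_Lpos
      by (simp add: a_def field_simps)
    moreover have "a \<ge> 0" using alpha_range A_Lpos eps_pos by (simp add: a_def)
    ultimately have "dist_sq_sum (w t - (D * sqrt \<epsilon>) *\<^sub>R v t)
        \<le> (1 + \<epsilon>) * (dist_sq_sum (w t) - 2 * a * (1 - \<alpha>) * excess_loss_sum (w t))
          + (1 + 1 / \<epsilon>) * (3 * real n * K * \<epsilon>\<^sup>2)"
      unfolding K_def using D_pos vreg_min[OF t] unfolding a_def
      by (intro dist_sq_sum_step[OF eps_pos _ _ _ v_approx[OF t] D_assm[OF _ t]]) auto
    moreover have "2 * a * (1 - \<alpha>) = (1 + \<epsilon>) ^ t * k"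
      by (simp add: a_def k_def)
    ultimately show ?thesis by (simp add: w_step[OF t])
  qed
  have "k * (\<Sum>t<T. excess_loss_sum (w t)) \<le> dist_sq_sum (w 0) + real T * (3 * real n * K * \<epsilon>\<^sup>2 / \<epsilon>)"
    using C_V by (intro discounted_descent_sum_le[OF eps_pos _ _ step]) (auto simp: K_def dist_sq_sum_def sum_nonneg)
  moreover have "0 \<le> K" "K \<le> D\<^sup>2 * H\<^sup>2 + real CARD('c) * (2 + (V + \<epsilon>\<^sup>2 + 2) * G * D\<^sup>2)\<^sup>2 + 2 + V"
    using C_V B_Gpos by (auto simp: K_def intro!: power_mono)
  ultimately show ?thesis
    using averaged_rate_bound[OF _ alpha_range eps_pos beta_pos T_def n_pos, of "exp \<beta> * L\<phi>"] A_Lpos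
    unfolding k_def by (simp add: dist_sq_sum_def excess_loss_sum_def sum_nonneg)
qed

end
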